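(* Let $s,t,q,N$ be integers with $0\le s<q$, $1\le t<q$, $N\ge0$, $t\nmid q$ and $\gcd(t,q)=g>1$. Put $\tilde t=t/g$, $\tilde q=q/g$, and write $s=\overline s g+s_g$ ($0\le s_g<g$), $\overline s=\overline{\overline s}\tilde t+\hat{\hat s}$ ($0\le\hat{\hat s}<\tilde t$), $\tilde q=\overline{\overline q}\tilde t+\hat{\hat q}$ ($1\le\hat{\hat q}<\tilde t$). Let $S^+(s,t,q,N)=\sum_{k=0}^N\lfloor(s+kt)/q\rfloor$, $M=\lfloor(s+Nt)/q\rfloor$, $x_M=(Mq-s)/t$, $S=\lfloor q/t\rfloor\frac{M(M-1)}2+M(N-\lceil x_M\rceil+1)$, $H=\{k\in\mathbb N:(\hat{\hat s}-k\hat{\hat q})\bmod\tilde t<\hat{\hat q}\}$, $J=H\cap\{0,\dots,\tilde t-1\}=\{j_0<\dots<j_{\hat{\hat q}-1}\}$, and $S_K=\sum_{k\in K}k$. Then: (a) if $j_0\ge M$, $S^+(s,t,q,N)=S$; (b.1) if $j_0<M\le j_{\hat{\hat q}-1}$, $S^+(s,t,q,N)=S+S_K$ with $K=H\cap\{0,\dots,M-1\}$; (b.2) if $j_{\hat{\hat q}-1}<M$ and $j_0+\tilde t\ge M$, $S^+(s,t,q,N)=S+S_J$; (b.3) if $j_{\hat{\hat q}-1}<M$ and $j_0+\tilde t<M$, with $u=\lfloor(M-1)/\tilde t\rfloor$ and $K=H\cap\{u\tilde t,\dots,M-1\}$, $S^+(s,t,q,N)=S+uS_J+\hat{\hat q}\,\tilde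 t\frac{(u-1)u}2+S_K$.
   Context: Here $r\bmod \tilde t$ denotes the representative of $r$ in $\{0,\dots,\tilde t-1\}$. *)

theory Defs
  imports Complex_Main
begin

definition Splus :: "int \<Rightarrow> int \<Rightarrow> int \<Rightarrow> int \<Rightarrow> int" where
  "Splus s t q N = (\<Sum>k\<in>{0..N}. (s + k * t) div q)"

definition SK :: "nat set \<Rightarrow> int" where
  "SK K = (\<Sum>k\<in>K. int k)"

end

theory Submission
  imports Defs
begin

(* Since (s + k t) div q counts the m >= 1 with m q <= s + k t, exchanging the order of
   summation gives S^+ = sum_{m=1..M} (N + 1 - c m) with c m = ceiling ((m q - s) / t).
   After dividing q and t by g, the increment c (m + 1) - c m is q div t plus a carry that
   is 1 exactly when m is in H, and summation by parts turns S^+ into S + S_K with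
   K = H restricted to [0, M).  H is periodic with period tt and meets every period in qhh
   points, since k |-> (shh - k qhh) mod tt permutes the residues mod tt (tt and qhh are
   coprime); this evaluates S_K in each case. *)

lemma int_le_div_iff_mult_le:
  fixes m x q :: int
  assumes "0 < q"
  shows "m \<le> x div q \<longleftrightarrow> m * q \<le> x"
proof
  assume "m \<le> x div q"
  then have "m * q \<le> x div q * q" using assms by simp
  also have "\<dots> = x - x mod q" by (simp add: minus_mod_eq_div_mult)
  also have "\<dots> \<le> x" using assms by simp
  finally show "m * q \<le> x" .
next
  assume "m * q \<le> x"
  then have "(m * q) div q \<le> x div q" using assms by (rule zdiv_mono1)
  then show "m \<le> x div q" using assms by simp
qed

lemma div_diff_eq_div_add_carry:
  fixes x y d :: int
  assumes "0 < d"
  shows "x div d - (x - y) div d = y div d + of_bool (x mod d < y mod d)"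
proof -
  define r where "r = x mod d - y mod d"
  have "0 \<le> x mod d" "x mod d < d" "0 \<le> y mod d" "y mod d < d" using assms by simp_all
  then have r: "- d < r" "r < d" unfolding r_def by linarith+
  have "x - y = r + (x div d - y div d) * d"
    unfolding r_def by (simp add: algebra_simps)
  then have "(x - y) div d = r div d + (x div d - y div d)"
    using assms by simp
  moreover have "r div d = - of_bool (r < 0)"
  proof (cases "r < 0")
    case True
    have "r div d = (r + d + (- 1) * d) div d" by simp
    also have "\<dots> = - 1" using assms r True by (simp only: div_mult_self1) simp
    finally show ?thesis using True by simp
  qed (use r in simp)
  ultimately show ?thesis unfolding r_def by simp
qed

lemma card_multiples_le:
  fixes x q :: int and n :: nat
  assumes "0 < q" "0 \<le> x" "x div q \<le> int n"
  shows "int (card ({1..n} \<inter> {m. int m * q \<le> x})) = x div q"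
proof -
  have "{1..n} \<inter> {m. int m * q \<le> x} = {1..nat (x div q)}"
    using assms by (auto simp: int_le_div_iff_mult_le[symmetric] nat_le_iff)
  then show ?thesis using assms by (simp add: pos_imp_zdiv_nonneg_iff)
qed

lemma card_atLeastAtMost_inter_ge:
  fixes c N :: int
  assumes "0 \<le> c" "c \<le> N + 1"
  shows "int (card ({0..N} \<inter> {k. c \<le> k})) = N + 1 - c"
proof -
  have "{0..N} \<inter> {k. c \<le> k} = {c..N}" using assms by auto
  then show ?thesis using assms by simp
qed

lemma Splus_eq_sum_ceiling:
  fixes s t q N :: int
  assumes "0 \<le> s" "s < q" "0 < t" "0 \<le> N"
  shows "Splus s t q N = (\<Sum>m\<in>{1..nat ((s + N * t) div q)}.
           N + 1 - \<lceil>real_of_int (int m * q - s) / real_of_int t\<rceil>)"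
proof -
  define n where "n = nat ((s + N * t) div q)"
  define c where "c m = \<lceil>real_of_int (int m * q - s) / real_of_int t\<rceil>" for m :: nat
  define P where "P m k \<longleftrightarrow> int m * q \<le> s + k * t" for m :: nat and k :: int
  have P_iff: "P m k \<longleftrightarrow> c m \<le> k" for m k
  proof -
    have "c m \<le> k \<longleftrightarrow> real_of_int (int m * q - s) \<le> real_of_int (k * t)"
      unfolding c_def ceiling_le_iff using assms by (simp add: pos_divide_le_eq)
    then show ?thesis unfolding P_def by linarith
  qed
  have "0 \<le> (s + N * t) div q" using assms by (simp add: pos_imp_zdiv_nonneg_iff)
  then have n: "int m * q \<le> s + N * t \<longleftrightarrow> m \<le> n" for m
    unfolding n_def using assms by (auto simp: int_le_div_iff_mult_le[symmetric] nat_le_iff)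
  have row: "(s + k * t) div q = (\<Sum>m\<in>{1..n}. of_bool (P m k))" if "k \<in> {0..N}" for k
  proof -
    have "s + k * t \<le> s + N * t" using that assms by (simp add: mult_right_mono)
    then have "(s + k * t) div q \<le> int n"
      unfolding n_def using assms by (simp add: zdiv_mono1 pos_imp_zdiv_nonneg_iff)
    then show ?thesis unfolding P_def using card_multiples_le that assms by simp
  qed
  have column: "(\<Sum>k\<in>{0..N}. of_bool (P m k)) = N + 1 - c m" if "m \<in> {1..n}" for m
  proof -
    have "q \<le> int m * q" using that assms by simp
    then have "s < int m * q" using assms by linarith
    then have "0 < real_of_int (int m * q - s) / real_of_int t"
      using assms by (intro divide_pos_pos) (simp_all only: of_int_0_less_iff diff_gt_0_iff_gt)
    then have "0 \<le> c m" unfolding c_def by simp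
    moreover have "c m \<le> N" using that n P_iff[of m N] unfolding P_def by simp
    ultimately show ?thesis using card_atLeastAtMost_inter_ge[of "c m" N] by (simp add: P_iff)
  qed
  have "Splus s t q N = (\<Sum>k\<in>{0..N}. \<Sum>m\<in>{1..n}. of_bool (P m k))"
    unfolding Splus_def using row by (rule sum.cong[OF refl])
  also have "\<dots> = (\<Sum>m\<in>{1..n}. \<Sum>k\<in>{0..N}. of_bool (P m k))"
    by (rule sum.swap)
  also have "\<dots> = (\<Sum>m\<in>{1..n}. N + 1 - c m)"
    using column by (rule sum.cong[OF refl])
  finally show ?thesis unfolding n_def c_def .
qed

lemma sum_lessThan_int: "(\<Sum>i<n. int i) = int n * (int n - 1) div 2"
  by (induction n) (auto simp: algebra_simps)

lemma sum_diff_last_eq_sum_increments: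
  fixes c :: "nat \<Rightarrow> int"
  shows "(\<Sum>m\<in>{1..n}. c n - c m) = (\<Sum>m<n. int m * (c (Suc m) - c m))"
proof (induction n)
  case (Suc n)
  have "(\<Sum>m\<in>{1..Suc n}. c (Suc n) - c m) = (\<Sum>m\<in>{1..n}. (c n - c m) + (c (Suc n) - c n))"
    by (simp add: sum.cl_ivl_Suc)
  also have "\<dots> = (\<Sum>m\<in>{1..n}. c n - c m) + int n * (c (Suc n) - c n)"
    by (simp only: sum.distrib) simp
  also have "\<dots> = (\<Sum>m<Suc n. int m * (c (Suc m) - c m))"
    unfolding Suc.IH by simp
  finally show ?case .
qed simp

lemma Splus_eq_S_plus_SK:
  fixes s t q N :: int and H :: "nat set"
  assumes "0 \<le> s" "s < q" "0 < t" "0 \<le> N"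
    and step: "\<And>m. \<lceil>real_of_int (int (Suc m) * q - s) / real_of_int t\<rceil>
                   - \<lceil>real_of_int (int m * q - s) / real_of_int t\<rceil> = q div t + of_bool (m \<in> H)"
  defines "M \<equiv> (s + N * t) div q"
  shows "Splus s t q N = \<lfloor>real_of_int q / real_of_int t\<rfloor> * (M * (M - 1) div 2)
           + M * (N - \<lceil>real_of_int (M * q - s) / real_of_int t\<rceil> + 1) + SK (H \<inter> {..<nat M})"
proof -
  define n where "n = nat M"
  have M: "M = int n"
    unfolding n_def M_def using assms by (simp add: pos_imp_zdiv_nonneg_iff)
  define c where "c m = \<lceil>real_of_int (int m * q - s) / real_of_int t\<rceil>" for m :: nat
  have "Splus s t q N = (\<Sum>m\<in>{1..n}. N + 1 - c m)"
    using Splus_eq_sum_ceiling[OF assms(1-4)] unfolding n_def M_def c_def .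
  also have "\<dots> = (\<Sum>m\<in>{1..n}. (N + 1 - c n) + (c n - c m))"
    by (simp add: algebra_simps)
  also have "\<dots> = int n * (N + 1 - c n) + (\<Sum>m<n. int m * (c (Suc m) - c m))"
    unfolding sum.distrib sum_diff_last_eq_sum_increments by simp
  also have "\<dots> = int n * (N + 1 - c n) + (\<Sum>m<n. int m * (q div t + of_bool (m \<in> H)))"
    unfolding c_def step ..
  also have "\<dots> = int n * (N + 1 - c n) + q div t * (\<Sum>m<n. int m) + SK (H \<inter> {..<n})"
    by (simp add: algebra_simps sum.distrib sum_distrib_left SK_def Int_commute)
  finally show ?thesis
    unfolding M sum_lessThan_int floor_divide_of_int_eq c_def by (simp add: algebra_simps)
qed

lemma ceiling_div_increment_reduced:
  fixes s q t g tt qt :: int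
  assumes "0 < g" "0 < tt" "t = g * tt" "q = g * qt"
  shows "\<lceil>real_of_int (int (Suc m) * q - s) / real_of_int t\<rceil>
           - \<lceil>real_of_int (int m * q - s) / real_of_int t\<rceil>
         = q div t + of_bool (((s div g) mod tt - int m * (qt mod tt)) mod tt < qt mod tt)"
proof -
  have ceiling_eq: "\<lceil>real_of_int (int k * q - s) / real_of_int t\<rceil> = - ((s div g - int k * qt) div tt)"
    for k
  proof -
    have "(s - int k * q) div g = (s + (- (int k * qt)) * g) div g"
      using assms by (simp add: algebra_simps)
    also have "\<dots> = s div g - int k * qt" using assms by (subst div_mult_self1) auto
    finally have "(s - int k * q) div t = (s div g - int k * qt) div tt"
      using assms by (simp add: zdiv_zmult2_eq)
    then show ?thesis unfolding ceiling_divide_eq_div minus_diff_eq by simp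
  qed
  define x where "x = s div g - int m * qt"
  have x_next: "x - qt = s div g - int (Suc m) * qt" unfolding x_def by (simp add: algebra_simps)
  have "\<lceil>real_of_int (int (Suc m) * q - s) / real_of_int t\<rceil>
               - \<lceil>real_of_int (int m * q - s) / real_of_int t\<rceil> = x div tt - (x - qt) div tt"
    unfolding ceiling_eq x_next unfolding x_def by simp
  also have "\<dots> = qt div tt + of_bool (x mod tt < qt mod tt)"
    using assms(2) by (rule div_diff_eq_div_add_carry)
  also have "x mod tt = ((s div g) mod tt - int m * (qt mod tt)) mod tt"
    unfolding x_def by (metis mod_diff_left_eq mod_diff_right_eq mod_mult_right_eq)
  also have "qt div tt = q div t" using assms by simp
  finally show ?thesis .
qed

lemma gcd_reduced_mod_pos_coprime:
  fixes t q :: int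
  assumes "0 < t" "\<not> t dvd q"
  defines "tt \<equiv> t div gcd t q" and "qt \<equiv> q div gcd t q"
  shows "0 < tt" and "0 < qt mod tt" and "coprime tt (qt mod tt)"
proof -
  have t: "t = gcd t q * tt" and q: "q = gcd t q * qt" unfolding tt_def qt_def by simp_all
  have "0 < gcd t q" using assms(1) by simp
  then show "0 < tt" using assms(1) t zero_less_mult_pos by metis
  have "\<not> tt dvd qt" using assms(2) t q by (metis mult_dvd_mono dvd_refl)
  then have "qt mod tt \<noteq> 0" by (simp add: dvd_eq_mod_eq_0)
  then show "0 < qt mod tt" using \<open>0 < tt\<close> pos_mod_sign[of tt qt] by linarith
  have "coprime tt qt" unfolding tt_def qt_def using div_gcd_coprime[of t q] assms(1) by simp
  then show "coprime tt (qt mod tt)" using \<open>0 < tt\<close> by simp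
qed

lemma card_residues_below:
  fixes a b d r :: int
  assumes "0 < d" "coprime d b" "0 \<le> r" "r \<le> d"
  shows "card {k::nat. k < nat d \<and> (a - int k * b) mod d < r} = nat r"
proof -
  define f where "f k = (a - int k * b) mod d" for k :: nat
  define A where "A = {..<nat d}"
  have inj: "inj_on f A"
  proof (rule inj_onI)
    fix k l assume "k \<in> A" "l \<in> A" "f k = f l"
    then have "d dvd (int l - int k) * b" and "\<bar>int l - int k\<bar> < d"
      unfolding f_def A_def by (auto simp: mod_eq_dvd_iff algebra_simps)
    then have "d dvd int l - int k" and "\<bar>int l - int k\<bar> < d"
      using assms(2) by (auto simp: coprime_dvd_mult_left_iff)
    then show "k = l" using dvd_imp_le_int[of "int l - int k" d] by (cases "k = l") auto
  qed
  have "f ` A = {0..<d}"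
  proof (rule card_subset_eq)
    show "f ` A \<subseteq> {0..<d}" unfolding f_def using assms(1) by auto
    show "card (f ` A) = card {0..<d}" using card_image[OF inj] unfolding A_def by simp
  qed simp
  then have "f ` {k \<in> A. f k < r} = {y \<in> {0..<d}. y < r}" by auto
  also have "\<dots> = {0..<r}" using assms(4) by auto
  finally have "f ` {k \<in> A. f k < r} = {0..<r}" .
  moreover have "card (f ` {k \<in> A. f k < r}) = card {k \<in> A. f k < r}"
    by (rule card_image) (use inj in \<open>auto intro: inj_on_subset\<close>)
  ultimately show ?thesis unfolding f_def A_def by simp
qed

lemma mod_diff_mult_add_period:
  fixes a b d :: int
  shows "(a - int (k + nat d) * b) mod d = (a - int k * b) mod d"
proof (cases "0 < d")
  case True
  then have "a - int (k + nat d) * b = (a - int k * b) + (- b) * d" by (simp add: algebra_simps)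
  then show ?thesis by (simp only: mod_mult_self1)
qed simp

lemma periodic_add_mult:
  fixes H :: "nat set"
  assumes "\<And>k. k + T \<in> H \<longleftrightarrow> k \<in> H"
  shows "k + v * T \<in> H \<longleftrightarrow> k \<in> H"
proof (induction v)
  case (Suc v)
  have "k + Suc v * T = (k + v * T) + T" by simp
  then show ?case using assms Suc.IH by metis
qed simp

lemma SK_periodic_lessThan_mult:
  fixes H :: "nat set"
  assumes per: "\<And>k. k + T \<in> H \<longleftrightarrow> k \<in> H"
  shows "SK (H \<inter> {..<v * T})
           = int v * SK (H \<inter> {..<T}) + int (card (H \<inter> {..<T})) * int T * (\<Sum>i<v. int i)"
proof (induction v)
  case (Suc v)
  define J where "J = H \<inter> {..<T}"
  have split: "H \<inter> {..<Suc v * T} = (H \<inter> {..<v * T}) \<union> (\<lambda>k. k + v * T) ` J"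
  proof (intro set_eqI iffI)
    fix x assume x: "x \<in> H \<inter> {..<Suc v * T}"
    show "x \<in> (H \<inter> {..<v * T}) \<union> (\<lambda>k. k + v * T) ` J"
    proof (cases "x < v * T")
      case False
      then have "x = (x - v * T) + v * T" by simp
      moreover have "x - v * T \<in> J"
        using x False periodic_add_mult[OF per, of "x - v * T" v] unfolding J_def by auto
      ultimately show ?thesis by blast
    qed (use x in simp)
  next
    fix x assume "x \<in> (H \<inter> {..<v * T}) \<union> (\<lambda>k. k + v * T) ` J"
    then show "x \<in> H \<inter> {..<Suc v * T}"
      using periodic_add_mult[OF per] unfolding J_def by auto
  qed
  have "SK ((\<lambda>k. k + v * T) ` J) = SK J + int (card J) * int (v * T)"
    unfolding SK_def by (subst sum.reindex) (auto simp: inj_on_def sum.distrib)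
  moreover have "SK (H \<inter> {..<Suc v * T}) = SK (H \<inter> {..<v * T}) + SK ((\<lambda>k. k + v * T) ` J)"
    unfolding split SK_def by (rule sum.union_disjoint) (auto simp: J_def)
  ultimately show ?case using Suc.IH unfolding J_def by (simp add: algebra_simps)
qed (simp add: SK_def)

lemma SK_periodic_lessThan:
  fixes H :: "nat set"
  assumes per: "\<And>k. k + T \<in> H \<longleftrightarrow> k \<in> H" and "v * T \<le> n"
  shows "SK (H \<inter> {..<n}) = int v * SK (H \<inter> {..<T})
           + int (card (H \<inter> {..<T})) * int T * (int v * (int v - 1) div 2) + SK (H \<inter> {v * T..<n})"
proof -
  have split: "H \<inter> {..<n} = (H \<inter> {..<v * T}) \<union> (H \<inter> {v * T..<n})" using assms(2) by auto
  have "SK (H \<inter> {..<n}) = SK (H \<inter> {..<v * T}) + SK (H \<inter> {v * T..<n})"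
    unfolding SK_def split by (rule sum.union_disjoint) auto
  then show ?thesis
    unfolding SK_periodic_lessThan_mult[OF per] sum_lessThan_int by simp
qed

lemma inter_lessThan_eq_empty_below_Min:
  fixes H :: "nat set"
  assumes "H \<inter> {..<T} \<noteq> {}" "n \<le> Min (H \<inter> {..<T})"
  shows "H \<inter> {..<n} = {}"
proof -
  have "Min (H \<inter> {..<T}) < T" using Min_in[OF _ assms(1)] by auto
  then show ?thesis using assms(2) Min_le[of "H \<inter> {..<T}"] by fastforce
qed

lemma periodic_inter_lessThan_eq_first_period:
  fixes H :: "nat set"
  assumes per: "\<And>k. k + T \<in> H \<longleftrightarrow> k \<in> H" and ne: "H \<inter> {..<T} \<noteq> {}"
    and "Max (H \<inter> {..<T}) < n" "n \<le> Min (H \<inter> {..<T}) + T"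
  shows "H \<inter> {..<n} = H \<inter> {..<T}"
proof
  show "H \<inter> {..<T} \<subseteq> H \<inter> {..<n}"
  proof
    fix k assume "k \<in> H \<inter> {..<T}"
    then have "k \<le> Max (H \<inter> {..<T})" by simp
    then have "k < n" using assms(3) by linarith
    then show "k \<in> H \<inter> {..<n}" using \<open>k \<in> H \<inter> {..<T}\<close> by simp
  qed
  show "H \<inter> {..<n} \<subseteq> H \<inter> {..<T}"
  proof
    fix k assume k: "k \<in> H \<inter> {..<n}"
    show "k \<in> H \<inter> {..<T}"
    proof (rule ccontr)
      assume "k \<notin> H \<inter> {..<T}"
      then have "k - T \<in> H" "k - T < Min (H \<inter> {..<T})"
        using k per[of "k - T"] assms(4) by auto
      moreover have "Min (H \<inter> {..<T}) < T" using Min_in[OF _ ne] by auto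
      ultimately have "k - T \<in> H \<inter> {..<T}" by simp
      then have "Min (H \<inter> {..<T}) \<le> k - T" by simp
      then show False using \<open>k - T < Min (H \<inter> {..<T})\<close> by linarith
    qed
  qed
qed

theorem theorem10:
  fixes s t q N :: int
  assumes hs: "0 \<le> s" "s < q"
    and ht: "1 \<le> t" "t < q"
    and hN: "0 \<le> N"
    and hndvd: "\<not> t dvd q"
    and hg: "gcd t q > 1"
  defines "g \<equiv> gcd t q"
  defines "tt \<equiv> t div g"
  defines "qt \<equiv> q div g"
  defines "sbar \<equiv> s div g"
  defines "shh \<equiv> sbar mod tt"
  defines "qhh \<equiv> qt mod tt"
  defines "M \<equiv> (s + N * t) div q"
  defines "S \<equiv> \<lfloor>real_of_int q / real_of_int t\<rfloor> * (M * (M - 1) div 2)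
                 + M * (N - \<lceil>real_of_int (M * q - s) / real_of_int t\<rceil> + 1)"
  defines "H \<equiv> {k::nat. (shh - int k * qhh) mod tt < qhh}"
  defines "J \<equiv> H \<inter> {0..<nat tt}"
  defines "j0 \<equiv> Min J"
  defines "jlast \<equiv> Max J"
  shows
    "(int j0 \<ge> M \<longrightarrow> Splus s t q N = S)
   \<and> (int j0 < M \<and> M \<le> int jlast \<longrightarrow>
        Splus s t q N = S + SK (H \<inter> {k. int k \<le> M - 1}))
   \<and> (int jlast < M \<and> int j0 + tt \<ge> M \<longrightarrow> Splus s t q N = S + SK J)
   \<and> (int jlast < M \<and> int j0 + tt < M \<longrightarrow>
        (let u = (M - 1) div tt
         in Splus s t q N = S + u * SK J + qhh * tt * ((u - 1) * u div 2)
                            + SK (H \<inter> {k. u * tt \<le> int k \<and> int k \<le> M - 1})))"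
proof -
  have "0 < t" "0 < q" using hs ht by linarith+
  then have g0: "0 < g" unfolding g_def by simp
  have t_eq: "t = g * tt" and q_eq: "q = g * qt" unfolding tt_def qt_def g_def by simp_all
  have tt0: "0 < tt" and qhh: "0 < qhh" and "coprime tt qhh"
    using gcd_reduced_mod_pos_coprime[OF \<open>0 < t\<close> hndvd]
    unfolding tt_def qt_def qhh_def g_def by auto
  have "qhh < tt" unfolding qhh_def using tt0 by simp
  define T where "T = nat tt"
  have T: "tt = int T" unfolding T_def using tt0 by simp
  have per: "\<And>k. k + T \<in> H \<longleftrightarrow> k \<in> H"
    unfolding H_def T_def by (simp only: mem_Collect_eq mod_diff_mult_add_period)
  have J: "J = H \<inter> {..<T}" unfolding J_def T_def by auto
  have card_J: "int (card J) = qhh"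
    using card_residues_below[OF tt0 \<open>coprime tt qhh\<close>, of qhh shh] qhh \<open>qhh < tt\<close>
    unfolding J H_def T_def by (simp add: Int_def conj_commute)
  then have "J \<noteq> {}" using qhh by auto
  have step: "\<And>m. \<lceil>real_of_int (int (Suc m) * q - s) / real_of_int t\<rceil>
                   - \<lceil>real_of_int (int m * q - s) / real_of_int t\<rceil> = q div t + of_bool (m \<in> H)"
    unfolding H_def shh_def qhh_def sbar_def
    using ceiling_div_increment_reduced[OF g0 tt0 t_eq q_eq] by simp
  have Sp: "Splus s t q N = S + SK (H \<inter> {..<nat M})"
    using Splus_eq_S_plus_SK[OF hs \<open>0 < t\<close> hN step] unfolding S_def M_def .
  have "0 \<le> M"
    unfolding M_def using hs hN \<open>0 < q\<close> \<open>0 < t\<close> by (simp add: pos_imp_zdiv_nonneg_iff)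
  then obtain n where n: "M = int n" using nonneg_int_cases by blast
  show ?thesis
  proof (intro conjI impI)
    assume "M \<le> int j0"
    then have "H \<inter> {..<n} = {}"
      using inter_lessThan_eq_empty_below_Min[of H T n] \<open>J \<noteq> {}\<close> unfolding J j0_def n by simp
    then show "Splus s t q N = S" using Sp n by (simp add: SK_def)
  next
    have "H \<inter> {k. int k \<le> M - 1} = H \<inter> {..<nat M}" using n by auto
    then show "Splus s t q N = S + SK (H \<inter> {k. int k \<le> M - 1})" using Sp by simp
  next
    assume "int jlast < M \<and> M \<le> int j0 + tt"
    then have "H \<inter> {..<n} = J"
      using periodic_inter_lessThan_eq_first_period[OF per, of n] \<open>J \<noteq> {}\<close>
      unfolding J jlast_def j0_def n T by simp
    then show "Splus s t q N = S + SK J" using Sp n by simp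
  next
    assume "int jlast < M \<and> int j0 + tt < M"
    then have "1 \<le> n" using n tt0 by linarith
    define v where "v = (n - 1) div T"
    have u: "(M - 1) div tt = int v"
      unfolding v_def n T using \<open>1 \<le> n\<close> by (simp add: zdiv_int of_nat_diff)
    have "v * T \<le> n" unfolding v_def using div_times_less_eq_dividend[of "n - 1" T] by linarith
    have K: "H \<inter> {k. int v * tt \<le> int k \<and> int k \<le> M - 1} = H \<inter> {v * T..<n}"
      unfolding n T by (auto simp flip: of_nat_mult)
    show "let u = (M - 1) div tt
         in Splus s t q N = S + u * SK J + qhh * tt * ((u - 1) * u div 2)
                            + SK (H \<inter> {k. u * tt \<le> int k \<and> int k \<le> M - 1})"
      using Sp SK_periodic_lessThan[OF per \<open>v * T \<le> n\<close>] card_J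
      unfolding Let_def u K unfolding J n T by (simp add: algebra_simps)
  qed
qed

end
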